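(* Let $(p_n)_n$, $(q_n)_n$ be real sequences with $0<p_n,q_n\le 1$, $p_nq_n\to 0$ and $\frac{p_nq_n^2n}{\log n}\to\infty$ as $n\to\infty$. Let $\rho_n=\frac{p_nq_n^2n}{1+\log n}$ and $r_n=\lceil \rho_n^{-1/3}p_n^{-1}\rceil$. Let $(F_n)_n$ and $(s_n)_n$ be real sequences with $F_n=O(p_nq_nn)$, $s_n=q_n(1+o(1))$, and $F_ns_n$ a nonnegative integer for every $n$, and let $B_n\sim\mathrm{Bin}(F_ns_n,(1-p_n)^{r_n})$. Then for every $\varepsilon>0$, \[ P\bigl(|B_n+F_n(1-s_n)-F_n(1-p_nq_n)^{r_n}|>\varepsilon p_n^2q_n^2nr_n\bigr)=o\!\left(\frac{p_n^2q_nr_n}{n^2}\right)\quad (n\to\infty). \]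
   Context: $\mathrm{Bin}(m,\theta)$ denotes the binomial distribution with $m$ trials and success probability $\theta$. Asymptotic notations $o$, $O$ refer to $n\to\infty$. *)

theory Defs
  imports "HOL-Probability.Probability" "HOL-Library.Landau_Symbols"
begin

definition rho_seq :: "(nat \<Rightarrow> real) \<Rightarrow> (nat \<Rightarrow> real) \<Rightarrow> nat \<Rightarrow> real" where
  "rho_seq p q n = p n * (q n)^2 * real n / (1 + ln (real n))"

definition r_seq :: "(nat \<Rightarrow> real) \<Rightarrow> (nat \<Rightarrow> real) \<Rightarrow> nat \<Rightarrow> nat" where
  "r_seq p q n = nat \<lceil>(rho_seq p q n) powr (-1/3) / p n\<rceil>"

end

theory Submission
  imports Defs
begin

text \<open>
  \<open>B\<^sub>n\<close> has mean \<open>F\<^sub>n s\<^sub>n (1 - p\<^sub>n)^r\<^sub>n\<close>. Expanding \<open>(1 - x)^r\<close> to second order shows that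
  this mean differs from the centring value \<open>F\<^sub>n (1 - p\<^sub>n q\<^sub>n)^r\<^sub>n - F\<^sub>n (1 - s\<^sub>n)\<close> by at most
  half the threshold \<open>T\<^sub>n = \<epsilon> p\<^sub>n\<^sup>2 q\<^sub>n\<^sup>2 n r\<^sub>n\<close>, because \<open>p\<^sub>n r\<^sub>n \<approx> \<rho>\<^sub>n^(-1/3) \<rightarrow> 0\<close> and
  \<open>s\<^sub>n/q\<^sub>n \<rightarrow> 1\<close>. Hoeffding's inequality then bounds the probability by
  \<open>2 exp (- T\<^sub>n\<^sup>2 / (2 F\<^sub>n s\<^sub>n))\<close>, and as \<open>p\<^sub>n r\<^sub>n \<ge> \<rho>\<^sub>n^(-1/3)\<close> the exponent is at least a
  multiple of \<open>\<rho>\<^sub>n^(1/3) (1 + log n)\<close>, eventually more than \<open>5 log n\<close>. So the probability is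
  \<open>O(n^-5)\<close>, while the error scale \<open>p\<^sub>n\<^sup>2 q\<^sub>n r\<^sub>n / n\<^sup>2\<close> is at least \<open>n^-4\<close>.
\<close>

lemma one_minus_power_le_quadratic:
  fixes x :: real
  assumes "0 \<le> x" "x \<le> 1"
  shows "(1 - x) ^ r \<le> 1 - real r * x + real r * (real r - 1) / 2 * x\<^sup>2"
proof (induction r)
  case 0
  then show ?case by simp
next
  case (Suc r)
  have "(1 - x) ^ Suc r = (1 - x) ^ r * (1 - x)"
    by simp
  also have "\<dots> \<le> (1 - real r * x + real r * (real r - 1) / 2 * x\<^sup>2) * (1 - x)"
    using Suc assms by (intro mult_right_mono) auto
  also have "\<dots> = 1 - real (Suc r) * x + real (Suc r) * (real (Suc r) - 1) / 2 * x\<^sup>2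
                   - real r * (real r - 1) / 2 * x ^ 3"
    by (simp add: field_simps power2_eq_square power3_eq_cube)
  also have "\<dots> \<le> 1 - real (Suc r) * x + real (Suc r) * (real (Suc r) - 1) / 2 * x\<^sup>2"
    using assms by (cases r) auto
  finally show ?case .
qed

text \<open>Both \<open>1 - (1 - a b)^r\<close> and \<open>b (1 - (1 - a)^r)\<close> equal \<open>r a b\<close> up to second order terms.\<close>
lemma one_minus_power_mult_diff_le:
  fixes a b :: real
  assumes a: "0 \<le> a" "a \<le> 1" and b: "0 \<le> b" "b \<le> 1"
  shows "\<bar>(1 - (1 - a * b) ^ r) - b * (1 - (1 - a) ^ r)\<bar> \<le> real r * (real r - 1) / 2 * a\<^sup>2 * b"
proof -
  define R where "R = real r * (real r - 1) / 2"
  have "R \<ge> 0"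
    unfolding R_def by (cases r) auto
  have ab: "0 \<le> a * b" "a * b \<le> 1"
    using a b by (auto simp: mult_le_one)
  have "1 - real r * (a * b) \<le> (1 - a * b) ^ r" "(1 - a * b) ^ r \<le> 1 - real r * (a * b) + R * (a * b)\<^sup>2"
    using Bernoulli_inequality[of "- a * b" r] one_minus_power_le_quadratic[OF ab] ab
    by (simp_all add: R_def)
  moreover have "b * (1 - real r * a) \<le> b * (1 - a) ^ r" "b * (1 - a) ^ r \<le> b * (1 - real r * a + R * a\<^sup>2)"
    using Bernoulli_inequality[of "- a" r] one_minus_power_le_quadratic[OF a] a b
    by (simp_all add: R_def mult_left_mono)
  moreover have "R * (a * b)\<^sup>2 \<le> R * a\<^sup>2 * b"
  proof -
    have "a\<^sup>2 * b * b \<le> a\<^sup>2 * b"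
      using a b by (simp add: mult_left_le)
    then show ?thesis
      using \<open>R \<ge> 0\<close> by (simp add: power2_eq_square mult_left_mono mult.assoc mult.left_commute)
  qed
  ultimately show ?thesis
    using \<open>R \<ge> 0\<close> unfolding R_def[symmetric] by (simp add: abs_le_iff algebra_simps)
qed

lemma binomial_prob_shifted_deviation_le:
  fixes \<theta> T a :: real
  assumes \<theta>: "0 \<le> \<theta>" "\<theta> \<le> 1" and T: "T > 0" and a: "\<bar>a + real m * \<theta>\<bar> \<le> T / 2"
  shows "measure_pmf.prob (binomial_pmf m \<theta>) {k. \<bar>real k + a\<bar> > T}
         \<le> (if m = 0 then 0 else 2 * exp (- T\<^sup>2 / (2 * real m)))"
proof (cases "m = 0")
  case True
  then show ?thesis
    using \<theta> a T by (simp add: binomial_pmf_0 indicator_def)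
next
  case False
  interpret binomial_distribution m \<theta>
    by unfold_locales (use \<theta> in auto)
  have "T < \<bar>real k + a\<bar> \<Longrightarrow> T / 2 \<le> \<bar>real k - real m * \<theta>\<bar>" for k
    using a by linarith
  then have "{k. \<bar>real k + a\<bar> > T} \<subseteq> {k. \<bar>real k - real m * \<theta>\<bar> \<ge> T / 2}"
    by auto
  then have "measure_pmf.prob (binomial_pmf m \<theta>) {k. \<bar>real k + a\<bar> > T}
      \<le> measure_pmf.prob (binomial_pmf m \<theta>) {k. \<bar>real k - real m * \<theta>\<bar> \<ge> T / 2}"
    by (rule measure_pmf.finite_measure_mono) simp
  also have "\<dots> \<le> 2 * exp (-2 * (T / 2)\<^sup>2 / real m)"
    by (rule prob_abs_ge) (use T False in auto)
  also have "-2 * (T / 2)\<^sup>2 / real m = - T\<^sup>2 / (2 * real m)"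
    by (simp add: field_simps power2_eq_square)
  finally show ?thesis
    using False by simp
qed

text \<open>\<open>F s (1 - p)^r\<close> is the mean of the binomial count, so this bounds the distance between the
  mean and the centre of the deviation event.\<close>
lemma centring_offset_le:
  fixes p q F s C \<delta> n :: real
  assumes p: "0 < p" "p \<le> 1" and q: "0 < q" "q \<le> 1"
    and F: "\<bar>F\<bar> \<le> C * (p * q * n)" and s: "\<bar>s - q\<bar> \<le> \<delta> * q"
  shows "\<bar>F * (1 - s) - F * (1 - p * q) ^ r + F * s * (1 - p) ^ r\<bar>
         \<le> C * (p\<^sup>2 * q\<^sup>2 * n * real r) * (p * (real r - 1) / 2 + \<delta>)"
proof -
  have r_sq: "0 \<le> real r * (real r - 1)"
    by (cases r) auto
  define E where "E = 1 - (1 - p) ^ r"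
  have E: "0 \<le> E" "E \<le> real r * p"
    unfolding E_def using Bernoulli_inequality[of "- p" r] p by (auto intro: power_le_one)
  have "\<bar>F * ((1 - (1 - p * q) ^ r) - q * E)\<bar> \<le> \<bar>F\<bar> * (real r * (real r - 1) / 2 * p\<^sup>2 * q)"
    unfolding abs_mult E_def using one_minus_power_mult_diff_le[of p q r] p q
    by (intro mult_left_mono) auto
  also have "\<dots> \<le> C * (p * q * n) * (real r * (real r - 1) / 2 * p\<^sup>2 * q)"
    using F p q r_sq by (intro mult_right_mono) auto
  finally have first: "\<bar>F * ((1 - (1 - p * q) ^ r) - q * E)\<bar>
      \<le> C * (p\<^sup>2 * q\<^sup>2 * n * real r) * (p * (real r - 1) / 2)"
    by (simp add: field_simps power2_eq_square)
  have "\<bar>F * (q - s) * E\<bar> = \<bar>F\<bar> * \<bar>s - q\<bar> * E"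
    using E by (simp add: abs_mult abs_minus_commute)
  also have "\<dots> \<le> C * (p * q * n) * (\<delta> * q) * (real r * p)"
    using F s E by (intro mult_mono) auto
  finally have second: "\<bar>F * (q - s) * E\<bar> \<le> C * (p\<^sup>2 * q\<^sup>2 * n * real r) * \<delta>"
    by (simp add: field_simps power2_eq_square)
  have "F * (1 - s) - F * (1 - p * q) ^ r + F * s * (1 - p) ^ r
      = F * ((1 - (1 - p * q) ^ r) - q * E) + F * (q - s) * E"
    unfolding E_def by (simp add: algebra_simps)
  then show ?thesis
    using first second by (simp add: distrib_left)
qed

lemma centring_offset_le_half:
  fixes p q F s C \<delta> n \<epsilon> :: real
  assumes p: "0 < p" "p \<le> 1" and q: "0 < q" "q \<le> 1"
    and F: "\<bar>F\<bar> \<le> C * (p * q * n)" and s: "\<bar>s - q\<bar> \<le> \<delta> * q"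
    and C: "C > 0" and r: "p * (real r - 1) \<le> \<epsilon> / (2 * C)" and \<delta>: "\<delta> \<le> \<epsilon> / (4 * C)"
  shows "\<bar>F * (1 - s) - F * (1 - p * q) ^ r + F * s * (1 - p) ^ r\<bar> \<le> \<epsilon> * (p\<^sup>2 * q\<^sup>2 * n * real r) / 2"
proof -
  have "0 \<le> (C * p * q) * n"
    using F abs_ge_zero[of F] by (simp add: mult.assoc)
  moreover have "0 < C * p * q"
    using C p q by simp
  ultimately have "0 \<le> n"
    by (simp add: zero_le_mult_iff)
  then have "0 \<le> p\<^sup>2 * q\<^sup>2 * n * real r"
    by simp
  then have "C * (p\<^sup>2 * q\<^sup>2 * n * real r) * (p * (real r - 1) / 2 + \<delta>)
      \<le> C * (p\<^sup>2 * q\<^sup>2 * n * real r) * (\<epsilon> / (4 * C) + \<epsilon> / (4 * C))"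
    using C r \<delta> by (intro mult_left_mono) auto
  also have "\<dots> = \<epsilon> * (p\<^sup>2 * q\<^sup>2 * n * real r) / 2"
    using C by (simp add: field_simps)
  finally show ?thesis
    using centring_offset_le[OF p q F s, of r] by linarith
qed

lemma exp_neg_le_inverse_power:
  fixes x t :: real
  assumes "0 < x" "real k * ln x \<le> t"
  shows "exp (- t) \<le> 1 / x ^ k"
proof -
  have "exp (- t) \<le> exp (- (real k * ln x))"
    using assms(2) by simp
  also have "\<dots> = 1 / x ^ k"
    using assms(1) by (simp add: exp_minus exp_of_nat_mult inverse_eq_divide)
  finally show ?thesis .
qed

lemma binomial_trials_le:
  fixes F s C \<delta> p q n :: real
  assumes q: "0 < q" and F: "\<bar>F\<bar> \<le> C * (p * q * n)" and s: "\<bar>s - q\<bar> \<le> \<delta> * q" "\<delta> \<le> 1"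
  shows "F * s \<le> 2 * C * (p * q\<^sup>2 * n)"
proof -
  have "\<delta> * q \<le> q"
    using mult_right_mono[OF s(2), of q] q by simp
  then have "0 \<le> s" "s \<le> 2 * q"
    using s(1) by linarith+
  then have "F * s \<le> \<bar>F\<bar> * (2 * q)"
    by (meson abs_ge_self dual_order.trans mult_left_mono mult_right_mono abs_ge_zero)
  also have "\<dots> \<le> C * (p * q * n) * (2 * q)"
    using F q by (intro mult_right_mono) auto
  finally show ?thesis
    by (simp add: power2_eq_square mult_ac)
qed

lemma hoeffding_exponent_ge:
  fixes C \<epsilon> Q L x y :: real and m :: nat
  assumes C: "C > 0" and \<epsilon>: "\<epsilon> > 0" and m: "0 < m" "real m \<le> 2 * C * Q"
    and Q: "Q = y ^ 3 * (1 + L)" and L: "0 \<le> L" and y: "0 < y" "20 * C / \<epsilon>\<^sup>2 \<le> y"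
    and x: "1 / y \<le> x"
  shows "5 * (1 + L) \<le> (\<epsilon> * Q * x)\<^sup>2 / (2 * real m)"
proof -
  have Q_pos: "Q > 0"
    using Q L y by simp
  have x_sq: "1 / y\<^sup>2 \<le> x\<^sup>2"
    using power_mono[OF x, of 2] y by (simp add: power_divide)
  have "5 * (1 + L) \<le> \<epsilon>\<^sup>2 * y / (4 * C) * (1 + L)"
    using y C \<epsilon> L by (intro mult_right_mono) (auto simp: field_simps)
  also have "\<dots> = \<epsilon>\<^sup>2 * Q / (4 * C) * (1 / y\<^sup>2)"
    using y C unfolding Q by (simp add: field_simps power2_eq_square power3_eq_cube)
  also have "\<dots> \<le> \<epsilon>\<^sup>2 * Q / (4 * C) * x\<^sup>2"
    using x_sq C Q_pos by (intro mult_left_mono) auto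
  also have "\<dots> = (\<epsilon> * Q * x)\<^sup>2 / (2 * (2 * C * Q))"
    using Q_pos by (simp add: field_simps power2_eq_square)
  also have "\<dots> \<le> (\<epsilon> * Q * x)\<^sup>2 / (2 * real m)"
    using m C Q_pos by (intro divide_left_mono) auto
  finally show ?thesis .
qed

lemma ln_ge_one:
  assumes "n \<ge> 3"
  shows "ln (real n) \<ge> 1"
  using assms ln_ge_iff[of "real n" 1] exp_le by simp

lemma deviation_prob_le_inverse_power:
  fixes p q F s \<epsilon> C \<delta> y :: real and n r m :: nat
  assumes n: "n \<ge> 3" and p: "0 < p" "p \<le> 1" and q: "0 < q" "q \<le> 1"
    and \<epsilon>: "\<epsilon> > 0" and C: "C > 0" and F: "\<bar>F\<bar> \<le> C * (p * q * real n)"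
    and s: "\<bar>s - q\<bar> \<le> \<delta> * q" and \<delta>: "\<delta> \<le> 1" "\<delta> \<le> \<epsilon> / (4 * C)"
    and y: "20 * C / \<epsilon>\<^sup>2 \<le> y" "2 * C / \<epsilon> \<le> y"
    and rho: "p * q\<^sup>2 * real n / (1 + ln (real n)) = y ^ 3"
    and r: "1 / (y * p) \<le> real r" "real r \<le> 1 / (y * p) + 1"
    and m: "F * s = real m"
  shows "measure_pmf.prob (binomial_pmf m ((1 - p) ^ r))
            {k. \<bar>real k + F * (1 - s) - F * (1 - p * q) ^ r\<bar> > \<epsilon> * p\<^sup>2 * q\<^sup>2 * real n * real r}
         \<le> 2 / real n ^ 5"
proof -
  have "0 < 2 * C / \<epsilon>"
    using C \<epsilon> by simp
  with y(2) have y_pos: "y > 0"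
    by linarith
  have ln_n: "ln (real n) \<ge> 1"
    using n by (rule ln_ge_one)
  define T where "T = \<epsilon> * p\<^sup>2 * q\<^sup>2 * real n * real r"
  have "0 < 1 / (y * p)"
    using y_pos p by simp
  with r(1) have r_pos: "real r > 0"
    by linarith
  then have T_pos: "T > 0"
    unfolding T_def using \<epsilon> p q n by simp
  have "p * (real r - 1) \<le> 1 / y"
    using r(2) y_pos p by (simp add: field_simps)
  also have "\<dots> \<le> \<epsilon> / (2 * C)"
    using y(2) y_pos C \<epsilon> by (simp add: field_simps)
  finally have offset: "\<bar>F * (1 - s) - F * (1 - p * q) ^ r + real m * (1 - p) ^ r\<bar> \<le> T / 2"
    using centring_offset_le_half[OF p q F s C _ \<delta>(2)] unfolding T_def m[symmetric] by (simp add: mult.assoc)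
  have "measure_pmf.prob (binomial_pmf m ((1 - p) ^ r))
            {k. \<bar>real k + F * (1 - s) - F * (1 - p * q) ^ r\<bar> > T}
         \<le> (if m = 0 then 0 else 2 * exp (- T\<^sup>2 / (2 * real m)))"
    using binomial_prob_shifted_deviation_le[OF _ _ T_pos offset] p
    by (simp add: power_le_one algebra_simps)
  also have "\<dots> \<le> 2 / real n ^ 5"
  proof (cases "m = 0")
    case False
    have "real m \<le> 2 * C * (p * q\<^sup>2 * real n)"
      using binomial_trials_le[OF q(1) F s \<delta>(1)] m by simp
    moreover have "p * q\<^sup>2 * real n = y ^ 3 * (1 + ln (real n))"
      using rho ln_n by (simp add: field_simps)
    moreover have "1 / y \<le> p * real r"
      using r(1) y_pos p by (simp add: field_simps)
    ultimately have "5 * (1 + ln (real n)) \<le> (\<epsilon> * (p * q\<^sup>2 * real n) * (p * real r))\<^sup>2 / (2 * real m)"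
      using False ln_n by (intro hoeffding_exponent_ge[OF C \<epsilon> _ _ _ _ y_pos y(1)]) auto
    then have "real 5 * ln (real n) \<le> T\<^sup>2 / (2 * real m)"
      unfolding T_def by (simp add: power2_eq_square algebra_simps)
    then have "exp (- (T\<^sup>2 / (2 * real m))) \<le> 1 / real n ^ 5"
      using n by (intro exp_neg_le_inverse_power) auto
    then show ?thesis
      using False by simp
  qed simp
  finally show ?thesis
    unfolding T_def .
qed

lemma powr_one_third_cube:
  fixes x :: real
  assumes "x > 0"
  shows "(x powr (1/3)) ^ 3 = x"
proof -
  have "(x powr (1/3)) ^ 3 = (x powr (1/3)) powr (real 3)"
    using assms by (subst powr_realpow) auto
  also have "\<dots> = x"
    using assms by (simp add: powr_powr)
  finally show ?thesis .
qed

lemma le_powr_one_third: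
  fixes x M :: real
  assumes "M > 0" "M ^ 3 \<le> x"
  shows "M \<le> x powr (1/3)"
proof -
  have "x > 0"
    using assms zero_less_power[of M 3] by linarith
  with assms(2) have "M ^ 3 \<le> (x powr (1/3)) ^ 3"
    by (simp only: powr_one_third_cube)
  then show ?thesis
    using assms(1) by (subst (asm) power_mono_iff) auto
qed

lemma r_seq_bounds:
  assumes "p n > 0" "rho_seq p q n > 0"
  defines "y \<equiv> rho_seq p q n powr (1/3)"
  shows "1 / (y * p n) \<le> real (r_seq p q n)" and "real (r_seq p q n) \<le> 1 / (y * p n) + 1"
proof -
  have "rho_seq p q n powr (-1/3) / p n = 1 / (y * p n)"
    unfolding y_def using assms by (simp add: powr_minus field_simps)
  then have r: "real (r_seq p q n) = of_int \<lceil>1 / (y * p n)\<rceil>"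
    unfolding r_seq_def y_def using assms by simp
  show "1 / (y * p n) \<le> real (r_seq p q n)"
    unfolding r by (rule le_of_int_ceiling)
  show "real (r_seq p q n) \<le> 1 / (y * p n) + 1"
    unfolding r by (rule of_int_ceiling_le_add_one)
qed

lemma filterlim_rho_seq_at_top:
  assumes growth: "filterlim (\<lambda>n. p n * (q n)\<^sup>2 * real n / ln (real n)) at_top sequentially"
  shows "filterlim (rho_seq p q) at_top sequentially"
  unfolding filterlim_at_top
proof
  fix Z :: real
  have "eventually (\<lambda>n. 2 * \<bar>Z\<bar> \<le> p n * (q n)\<^sup>2 * real n / ln (real n) \<and> n \<ge> 3) sequentially"
    using growth unfolding filterlim_at_top by (auto intro: eventually_conj eventually_ge_at_top)
  then show "eventually (\<lambda>n. Z \<le> rho_seq p q n) sequentially"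
  proof eventually_elim
    case (elim n)
    define Q where "Q = p n * (q n)\<^sup>2 * real n"
    have ln_n: "1 \<le> ln (real n)"
      using elim by (intro ln_ge_one) simp
    have "0 \<le> Q / ln (real n)"
      using elim unfolding Q_def by linarith
    with ln_n have "0 \<le> Q"
      by (simp add: zero_le_divide_iff)
    have "Z \<le> \<bar>Z\<bar>"
      by simp
    also have "\<dots> \<le> Q / (2 * ln (real n))"
      using elim ln_n unfolding Q_def by (simp add: field_simps)
    also have "\<dots> \<le> Q / (1 + ln (real n))"
      using \<open>0 \<le> Q\<close> ln_n by (intro divide_left_mono) auto
    finally show ?case
      unfolding rho_seq_def Q_def .
  qed
qed

lemma inverse_power_le_error_scale:
  fixes p q :: real and n r :: nat
  assumes p: "0 < p" "p \<le> 1" and q: "0 < q" "q \<le> 1" and r: "1 \<le> r"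
    and big: "1 \<le> p * q\<^sup>2 * real n"
  shows "1 / real n ^ 4 \<le> p\<^sup>2 * q * real r / (real n)\<^sup>2"
proof -
  have n: "real n > 0"
    using big p q by (cases n) auto
  have "q\<^sup>2 \<le> q"
    using q by (simp add: power2_eq_square mult_left_le_one_le)
  moreover have "q \<le> real r"
    using q r by simp
  ultimately have "q\<^sup>2 \<le> q" "q\<^sup>2 \<le> real r"
    by simp_all
  then have "p * q\<^sup>2 * real n \<le> p * q * real n" "p * q\<^sup>2 * real n \<le> p * real r * real n"
    using p n by (auto intro!: mult_right_mono mult_left_mono)
  then have "1 * 1 \<le> (p * q * real n) * (p * real r * real n)"
    using big by (intro mult_mono) auto
  then show ?thesis
    using n by (simp add: field_simps power2_eq_square power4_eq_xxxx)
qed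

lemma deviation_prob_bigo_inverse_power:
  fixes p q F s :: "nat \<Rightarrow> real" and \<epsilon> :: real
  assumes p_range: "\<And>n. 0 < p n \<and> p n \<le> 1"
    and q_range: "\<And>n. 0 < q n \<and> q n \<le> 1"
    and growth: "filterlim (\<lambda>n. p n * (q n)\<^sup>2 * real n / ln (real n)) at_top sequentially"
    and F_bound: "F \<in> O(\<lambda>n. p n * q n * real n)"
    and s_asymp: "(\<lambda>n. s n - q n) \<in> o(\<lambda>n. q n)"
    and Fs_nat: "\<And>n. F n * s n \<in> \<nat>"
    and \<epsilon>: "\<epsilon> > 0"
  shows "(\<lambda>n. measure_pmf.prob
            (binomial_pmf (nat \<lfloor>F n * s n\<rfloor>) ((1 - p n) ^ r_seq p q n))
            {k. \<bar>real k + F n * (1 - s n) - F n * (1 - p n * q n) ^ r_seq p q n\<bar>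
                 > \<epsilon> * (p n)\<^sup>2 * (q n)\<^sup>2 * real n * real (r_seq p q n)})
         \<in> O(\<lambda>n. 1 / real n ^ 5)"
proof (rule landau_o.bigI[of 2])
  obtain C where C: "C > 0"
    and F: "eventually (\<lambda>n. norm (F n) \<le> C * norm (p n * q n * real n)) sequentially"
    using landau_o.bigE[OF F_bound] by blast
  define \<delta> where "\<delta> = min 1 (\<epsilon> / (4 * C))"
  define M where "M = max (20 * C / \<epsilon>\<^sup>2) (2 * C / \<epsilon>)"
  have "\<delta> > 0" "M > 0"
    unfolding \<delta>_def M_def using \<epsilon> C by (auto simp: less_max_iff_disj)
  have s: "eventually (\<lambda>n. norm (s n - q n) \<le> \<delta> * norm (q n)) sequentially"
    using landau_o.smallD[OF s_asymp \<open>\<delta> > 0\<close>] .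
  have rho: "eventually (\<lambda>n. M ^ 3 \<le> rho_seq p q n) sequentially"
    using filterlim_rho_seq_at_top[OF growth] unfolding filterlim_at_top by blast
  show "eventually (\<lambda>n. norm (measure_pmf.prob
            (binomial_pmf (nat \<lfloor>F n * s n\<rfloor>) ((1 - p n) ^ r_seq p q n))
            {k. \<bar>real k + F n * (1 - s n) - F n * (1 - p n * q n) ^ r_seq p q n\<bar>
                 > \<epsilon> * (p n)\<^sup>2 * (q n)\<^sup>2 * real n * real (r_seq p q n)})
         \<le> 2 * norm (1 / real n ^ 5)) sequentially"
    using F s rho eventually_ge_at_top[of 3]
  proof eventually_elim
    case (elim n)
    define y where "y = rho_seq p q n powr (1/3)"
    have "rho_seq p q n > 0"
      using elim(3) zero_less_power[OF \<open>M > 0\<close>, of 3] by linarith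
    then have "y ^ 3 = rho_seq p q n" "M \<le> y"
      unfolding y_def using powr_one_third_cube le_powr_one_third \<open>M > 0\<close> elim(3) by auto
    obtain m where m: "F n * s n = real m"
      using Fs_nat[of n] by (auto elim: Nats_cases)
    then have "nat \<lfloor>F n * s n\<rfloor> = m"
      by simp
    moreover have "p n * (q n)\<^sup>2 * real n / (1 + ln (real n)) = y ^ 3"
      using \<open>y ^ 3 = rho_seq p q n\<close> unfolding rho_seq_def by simp
    moreover have "2 * C / \<epsilon> \<le> y" "20 * C / \<epsilon>\<^sup>2 \<le> y"
      using \<open>M \<le> y\<close> unfolding M_def by auto
    moreover have "\<bar>F n\<bar> \<le> C * (p n * q n * real n)" "\<bar>s n - q n\<bar> \<le> \<delta> * q n"
      using elim(1,2) p_range[of n] q_range[of n] by simp_all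
    ultimately show ?case
      using deviation_prob_le_inverse_power[of n "p n" "q n" \<epsilon> C "F n" "s n" \<delta> y]
        r_seq_bounds[OF _ \<open>rho_seq p q n > 0\<close>] elim(4) p_range[of n] q_range[of n] \<epsilon> C m
      unfolding y_def \<delta>_def by simp
  qed
qed simp

lemma inverse_power_bigo_error_scale:
  fixes p q :: "nat \<Rightarrow> real"
  assumes p_range: "\<And>n. 0 < p n \<and> p n \<le> 1"
    and q_range: "\<And>n. 0 < q n \<and> q n \<le> 1"
    and growth: "filterlim (\<lambda>n. p n * (q n)\<^sup>2 * real n / ln (real n)) at_top sequentially"
  shows "(\<lambda>n. 1 / real n ^ 4) \<in> O(\<lambda>n. (p n)\<^sup>2 * q n * real (r_seq p q n) / (real n)\<^sup>2)"
proof (rule landau_o.bigI[of 1])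
  show "eventually (\<lambda>n. norm (1 / real n ^ 4)
      \<le> 1 * norm ((p n)\<^sup>2 * q n * real (r_seq p q n) / (real n)\<^sup>2)) sequentially"
    using growth[unfolded filterlim_at_top, rule_format, of 1] eventually_ge_at_top[of 3]
      filterlim_rho_seq_at_top[OF growth, unfolded filterlim_at_top, rule_format, of 1]
  proof eventually_elim
    case (elim n)
    have "0 < p n" "0 < rho_seq p q n"
      using p_range[of n] elim(3) by auto
    then have "0 < 1 / (rho_seq p q n powr (1/3) * p n)"
      by simp
    then have "1 \<le> r_seq p q n"
      using r_seq_bounds(1)[OF \<open>0 < p n\<close> \<open>0 < rho_seq p q n\<close>] by linarith
    moreover have "1 \<le> p n * (q n)\<^sup>2 * real n"
      using elim(1) ln_ge_one[OF elim(2)] by (simp add: field_simps)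
    ultimately have "1 / real n ^ 4 \<le> (p n)\<^sup>2 * q n * real (r_seq p q n) / (real n)\<^sup>2"
      using inverse_power_le_error_scale p_range[of n] q_range[of n] by blast
    then show ?case
      using q_range[of n] by simp
  qed
qed simp

lemma inverse_power_smallo:
  "(\<lambda>n. 1 / real n ^ 5) \<in> o(\<lambda>n. 1 / real n ^ 4)"
proof (rule smalloI_tendsto)
  have "(\<lambda>n. (1 / real n ^ 5) / (1 / real n ^ 4)) = (\<lambda>n. 1 / real n)"
    by (simp add: fun_eq_iff numeral_eq_Suc)
  then show "((\<lambda>n. (1 / real n ^ 5) / (1 / real n ^ 4)) \<longlongrightarrow> 0) sequentially"
    using lim_const_over_n[of 1] by simp
  show "eventually (\<lambda>n. 1 / real n ^ 4 \<noteq> 0) sequentially"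
    using eventually_gt_at_top[of 0] by eventually_elim simp
qed

theorem lemma8:
  fixes p q F s :: "nat \<Rightarrow> real"
  assumes p_range: "\<And>n. 0 < p n \<and> p n \<le> 1"
    and q_range: "\<And>n. 0 < q n \<and> q n \<le> 1"
    and pq_lim: "(\<lambda>n. p n * q n) \<longlonglongrightarrow> 0"
    and growth: "filterlim (\<lambda>n. p n * (q n)^2 * real n / ln (real n)) at_top sequentially"
    and F_bound: "F \<in> O(\<lambda>n. p n * q n * real n)"
    and s_asymp: "(\<lambda>n. s n - q n) \<in> o(\<lambda>n. q n)"
    and Fs_nat: "\<And>n. F n * s n \<in> \<nat>"
  shows "\<forall>\<epsilon>>0. (\<lambda>n. measure_pmf.prob
            (binomial_pmf (nat \<lfloor>F n * s n\<rfloor>) ((1 - p n) ^ r_seq p q n))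
            {k. \<bar>real k + F n * (1 - s n) - F n * (1 - p n * q n) ^ r_seq p q n\<bar>
                 > \<epsilon> * (p n)^2 * (q n)^2 * real n * real (r_seq p q n)})
         \<in> o(\<lambda>n. (p n)^2 * q n * real (r_seq p q n) / (real n)^2)"
  using deviation_prob_bigo_inverse_power[OF p_range q_range growth F_bound s_asymp Fs_nat]
    landau_o.small_big_trans[OF inverse_power_smallo inverse_power_bigo_error_scale[OF p_range q_range growth]]
  by (blast intro: landau_o.big_small_trans)

end
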